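(* Let $F$ be an $r$-configuration of $U$ and $V$ and let $k\ge1$. Then the set of pairs of $F$ incident to elements of $A_k(\Phi(F))$ equals the set of pairs of $F$ incident to elements of $B_k(\Phi(F))$.
   Context: $n,r\ge1$, $m=rn$. $U=\{u_1\prec\cdots\prec u_n\}$, $V=\{v_1\prec\cdots\prec v_n\}$; $\overline U=U\times[r]$, $\overline V=V\times[r]$ ordered lexicographically (write $u^s$ for $(u,s)$). An $r$-configuration is a bijection between $\overline U$ and $\overline V$. Pairs $(\bar u,\bar v),(\bar u',\bar v')$ are noncrossing if ($\bar u\prec\bar u'$ and $\bar v\prec\bar v'$) or ($\bar u'\prec\bar u$ and $\bar v'\prec\bar v$). For an $r$-configuration $F$: for $\bar u\in\overline U$ with pair $(\bar u,\bar v')\in F$, $a_{\bar u}$ is the maximum size of a set of pairwise noncrossing pairs of $F$ containing $(\bar u,\bar v')$ all of whose pairs $(x,y)$ satisfy $x\preceq\bar u$, $y\preceq\bar v'$; $b_{\bar v}$ is defined symmetrically for $\bar v\in\overline V$. $\Phi(F)=a_{u_1^1}\cdots a_{u_n^r}|b_{v_1^1}\cdots b_{v_n^r}$ (a walk with positive steps $e_{a_{\bar u}}$ followed by negative steps $-e_{b_{\bar v}}$). For such a walk $w$, $A_k(w)=\{\bar u: a_{\bar u}=k\}$, $B_k(w)=\{\bar v:b_{\bar v}=k\}$. *)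

theory Defs
  imports Main
begin

text \<open>U = {u_1 < ... < u_n} and V = {v_1 < ... < v_n} are modelled by the indices 1..n.
  The element u_i^s of the blow-up U x [r] is the pair (i,s); likewise for V.\<close>

definition blowup :: "nat \<Rightarrow> nat \<Rightarrow> (nat \<times> nat) set" where
  "blowup n r = {1..n} \<times> {1..r}"

definition lexless :: "nat \<times> nat \<Rightarrow> nat \<times> nat \<Rightarrow> bool" where
  "lexless x y \<longleftrightarrow> fst x < fst y \<or> (fst x = fst y \<and> snd x < snd y)"

definition lexle :: "nat \<times> nat \<Rightarrow> nat \<times> nat \<Rightarrow> bool" where
  "lexle x y \<longleftrightarrow> lexless x y \<or> x = y"

type_synonym pair = "(nat \<times> nat) \<times> (nat \<times> nat)"

definition r_config :: "nat \<Rightarrow> nat \<Rightarrow> pair set \<Rightarrow> bool" where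
  "r_config n r F \<longleftrightarrow> F \<subseteq> blowup n r \<times> blowup n r
     \<and> (\<forall>x\<in>blowup n r. \<exists>!y. (x, y) \<in> F)
     \<and> (\<forall>y\<in>blowup n r. \<exists>!x. (x, y) \<in> F)"

definition noncrossing :: "pair \<Rightarrow> pair \<Rightarrow> bool" where
  "noncrossing p q \<longleftrightarrow>
     (lexless (fst p) (fst q) \<and> lexless (snd p) (snd q))
   \<or> (lexless (fst q) (fst p) \<and> lexless (snd q) (snd p))"

definition pairwise_noncrossing :: "pair set \<Rightarrow> bool" where
  "pairwise_noncrossing S \<longleftrightarrow> (\<forall>p\<in>S. \<forall>q\<in>S. p \<noteq> q \<longrightarrow> noncrossing p q)"

definition below_chain :: "pair set \<Rightarrow> pair \<Rightarrow> nat" where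
  "below_chain F p = Max {card S | S. S \<subseteq> F \<and> p \<in> S \<and> pairwise_noncrossing S
       \<and> (\<forall>q\<in>S. lexle (fst q) (fst p) \<and> lexle (snd q) (snd p))}"

definition a_val :: "pair set \<Rightarrow> nat \<times> nat \<Rightarrow> nat" where
  "a_val F u = below_chain F (u, THE v. (u, v) \<in> F)"

definition b_val :: "pair set \<Rightarrow> nat \<times> nat \<Rightarrow> nat" where
  "b_val F v = below_chain F (THE u. (u, v) \<in> F, v)"

text \<open>The walk Phi(F) = a_{u_1^1} ... a_{u_n^r} | b_{v_1^1} ... b_{v_n^r}, recorded by its
  labels: the step attached to u in U x [r] is e_{a_u}, the one attached to v is -e_{b_v}.\<close>
definition Phi :: "pair set \<Rightarrow> ((nat \<times> nat \<Rightarrow> nat) \<times> (nat \<times> nat \<Rightarrow> nat))" where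
  "Phi F = (a_val F, b_val F)"

definition A_set :: "nat \<Rightarrow> nat \<Rightarrow> nat \<Rightarrow> ((nat \<times> nat \<Rightarrow> nat) \<times> (nat \<times> nat \<Rightarrow> nat)) \<Rightarrow> (nat \<times> nat) set" where
  "A_set n r k w = {u \<in> blowup n r. fst w u = k}"

definition B_set :: "nat \<Rightarrow> nat \<Rightarrow> nat \<Rightarrow> ((nat \<times> nat \<Rightarrow> nat) \<times> (nat \<times> nat \<Rightarrow> nat)) \<Rightarrow> (nat \<times> nat) set" where
  "B_set n r k w = {v \<in> blowup n r. snd w v = k}"

end

theory Submission
  imports Defs
begin

lemma r_config_a_val:
  assumes "r_config n r F" and "(u, v) \<in> F"
  shows "a_val F u = below_chain F (u, v)"
proof -
  have "u \<in> blowup n r"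
    using assms unfolding r_config_def by blast
  then have "\<exists>!y. (u, y) \<in> F"
    using assms(1) unfolding r_config_def by blast
  then have "(THE y. (u, y) \<in> F) = v"
    using assms(2) by (rule the1_equality)
  then show ?thesis
    unfolding a_val_def by simp
qed

lemma r_config_b_val:
  assumes "r_config n r F" and "(u, v) \<in> F"
  shows "b_val F v = below_chain F (u, v)"
proof -
  have "v \<in> blowup n r"
    using assms unfolding r_config_def by blast
  then have "\<exists>!x. (x, v) \<in> F"
    using assms(1) unfolding r_config_def by blast
  then have "(THE x. (x, v) \<in> F) = u"
    using assms(2) by (rule the1_equality)
  then show ?thesis
    unfolding b_val_def by simp
qed

lemma r_config_a_val_eq_b_val:
  assumes "r_config n r F" and "(u, v) \<in> F"
  shows "a_val F u = b_val F v"
  using r_config_a_val[OF assms] r_config_b_val[OF assms] by simp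

theorem lemma4:
  fixes n r k :: nat and F :: "pair set"
  assumes "n \<ge> 1" and "r \<ge> 1"
    and "r_config n r F"
    and "k \<ge> 1"
  shows "{p \<in> F. fst p \<in> A_set n r k (Phi F)} = {p \<in> F. snd p \<in> B_set n r k (Phi F)}"
proof -
  have "fst p \<in> A_set n r k (Phi F) \<longleftrightarrow> snd p \<in> B_set n r k (Phi F)" if "p \<in> F" for p
  proof -
    obtain u v where p: "p = (u, v)"
      by (cases p)
    have "u \<in> blowup n r" and "v \<in> blowup n r"
      using assms(3) that p unfolding r_config_def by auto
    moreover have "a_val F u = b_val F v"
      using r_config_a_val_eq_b_val[OF assms(3)] that p by simp
    ultimately show ?thesis
      unfolding p A_set_def B_set_def Phi_def by simp
  qed
  then show ?thesis
    by blast
qed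

end
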